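(* Let $k\ge 2$ and let $G$ be a finite simple graph admitting a closed neighborhood balanced $k$-coloring $c$ with color classes $V_1,\dots,V_k$. Then for all distinct $i,j\in\{1,\dots,k\}$, $$|E(V_i,V_j)|=\frac{2|E(G)|+|V(G)|}{k^2},$$ and for every $i\in\{1,\dots,k\}$, $$|E(V_i,V_i)|=\frac{2|E(G)|+|V(G)|}{2k^2}-\frac{|V_i|}{2}.$$
   Context: For a vertex $v$, $N[v]=\{v\}\cup\{u : uv\in E(G)\}$. A closed neighborhood balanced $k$-coloring of $G$ is a map $c: V(G)\to\{1,\dots,k\}$ such that for every vertex $v$ the numbers $|\{u\in N[v] : c(u)=i\}|$, $i=1,\dots,k$, are all equal; its color classes are $V_i=c^{-1}(i)$. For $X,Y\subseteq V(G)$, $E(X,Y)$ is the set of edges joining a vertex of $X$ to a vertex of $Y$; $E(X,X)$ is the set of edges with both endpoints in $X$. *)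

theory Defs
  imports Complex_Main
begin

definition simple_graph :: "'a set \<Rightarrow> 'a set set \<Rightarrow> bool" where
  "simple_graph V E \<longleftrightarrow> finite V \<and> (\<forall>e\<in>E. e \<subseteq> V \<and> card e = 2)"

definition closed_nbhd :: "'a set \<Rightarrow> 'a set set \<Rightarrow> 'a \<Rightarrow> 'a set" where
  "closed_nbhd V E v = {v} \<union> {u \<in> V. {u, v} \<in> E}"

definition cnb_coloring :: "'a set \<Rightarrow> 'a set set \<Rightarrow> nat \<Rightarrow> ('a \<Rightarrow> nat) \<Rightarrow> bool" where
  "cnb_coloring V E k c \<longleftrightarrow>
     (\<forall>v\<in>V. c v \<in> {1..k}) \<and>
     (\<forall>v\<in>V. \<forall>i\<in>{1..k}. \<forall>j\<in>{1..k}.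
        card {u \<in> closed_nbhd V E v. c u = i} = card {u \<in> closed_nbhd V E v. c u = j})"

definition color_class :: "'a set \<Rightarrow> ('a \<Rightarrow> nat) \<Rightarrow> nat \<Rightarrow> 'a set" where
  "color_class V c i = {v \<in> V. c v = i}"

definition edges_between :: "'a set set \<Rightarrow> 'a set \<Rightarrow> 'a set \<Rightarrow> 'a set set" where
  "edges_between E X Y = {e \<in> E. \<exists>x\<in>X. \<exists>y\<in>Y. e = {x, y}}"

end

theory Submission
  imports Defs
begin

text \<open>Count ordered pairs \<open>(x, y)\<close> with \<open>y \<in> N[x]\<close>. For a fixed \<open>x \<in> V\<^sub>i\<close> the number of such
  pairs in \<open>{x} \<times> V\<^sub>j\<close> is \<open>|N[x] \<inter> V\<^sub>j|\<close>, which balance makes independent of \<open>j\<close>; as the count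
  is symmetric in \<open>i\<close> and \<open>j\<close>, all \<open>k\<^sup>2\<close> counts for pairs of colour classes coincide. They add up
  to the count on \<open>V \<times> V\<close>, namely \<open>2|E| + |V|\<close>. Finally, for \<open>i \<noteq> j\<close> each edge of \<open>E(V\<^sub>i, V\<^sub>j)\<close>
  gives exactly one pair, while on \<open>V\<^sub>i \<times> V\<^sub>i\<close> each edge gives two pairs and each vertex one.\<close>

definition closed_adj_pairs :: "'a set set \<Rightarrow> 'a set \<Rightarrow> 'a set \<Rightarrow> ('a \<times> 'a) set" where
  "closed_adj_pairs E X Y = {(x, y) \<in> X \<times> Y. x = y \<or> {x, y} \<in> E}"

lemma card_closed_adj_pairs:
  assumes "finite X" "finite Y"
  shows "card (closed_adj_pairs E X Y) = (\<Sum>x\<in>X. \<Sum>y\<in>Y. of_bool (x = y \<or> {x, y} \<in> E))"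
proof -
  have "closed_adj_pairs E X Y = (SIGMA x:X. Y \<inter> {y. x = y \<or> {x, y} \<in> E})"
    by (auto simp: closed_adj_pairs_def)
  then show ?thesis
    using assms by (simp del: of_bool_or_iff)
qed

lemma card_closed_adj_pairs_commute:
  "card (closed_adj_pairs E X Y) = card (closed_adj_pairs E Y X)"
proof -
  have "closed_adj_pairs E Y X = prod.swap ` closed_adj_pairs E X Y"
    by (force simp: closed_adj_pairs_def insert_commute)
  then show ?thesis
    by (simp add: card_image)
qed

lemma card_edges_between_disjoint:
  assumes "X \<inter> Y = {}"
  shows "card (edges_between E X Y) = card (closed_adj_pairs E X Y)"
proof -
  let ?edge = "\<lambda>(x, y). {x, y}"
  have "edges_between E X Y = ?edge ` closed_adj_pairs E X Y"
    using assms by (auto simp: edges_between_def closed_adj_pairs_def image_iff)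
  moreover have "inj_on ?edge (closed_adj_pairs E X Y)"
    using assms by (auto simp: inj_on_def closed_adj_pairs_def doubleton_eq_iff)
  ultimately show ?thesis
    by (simp add: card_image)
qed

lemma card_adj_pairs_self:
  assumes "\<forall>e\<in>E. card e = 2" "finite X"
  shows "card {(x, y) \<in> X \<times> X. {x, y} \<in> E} = 2 * card (edges_between E X X)"
proof -
  let ?edge = "\<lambda>(x, y). {x, y}"
  let ?P = "{(x, y) \<in> X \<times> X. {x, y} \<in> E}"
  let ?B = "edges_between E X X"
  have "?B \<subseteq> ?edge ` (X \<times> X)"
    by (auto simp: edges_between_def)
  then have "finite ?B"
    using assms(2) by (meson finite_SigmaI finite_imageI finite_subset)
  have "?P \<subseteq> X \<times> X"
    by auto
  then have "finite ?P"
    using assms(2) by (meson finite_SigmaI finite_subset)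
  have "?edge ` ?P \<subseteq> ?B"
    by (auto simp: edges_between_def)
  have fibre: "card {p \<in> ?P. ?edge p = e} = 2" if e: "e \<in> ?B" for e
  proof -
    obtain x y where xy: "x \<in> X" "y \<in> X" "{x, y} \<in> E" and "e = {x, y}"
      using e unfolding edges_between_def by blast
    then have "x \<noteq> y"
      using assms(1) by fastforce
    have "{y, x} \<in> E"
      using xy by (simp add: insert_commute)
    have "{p \<in> ?P. ?edge p = {x, y}} = {(x, y), (y, x)}"
      using xy \<open>{y, x} \<in> E\<close> by (fastforce simp: doubleton_eq_iff)
    then show ?thesis
      using \<open>x \<noteq> y\<close> \<open>e = {x, y}\<close> by simp
  qed
  have "card ?P = (\<Sum>e\<in>?B. card {p \<in> ?P. ?edge p = e})"
    unfolding card_eq_sum by (rule sum.group[symmetric, OF \<open>finite ?P\<close> \<open>finite ?B\<close> \<open>?edge ` ?P \<subseteq> ?B\<close>])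
  also have "\<dots> = 2 * card ?B"
    using fibre by simp
  finally show ?thesis .
qed

lemma card_closed_adj_pairs_self:
  assumes "\<forall>e\<in>E. card e = 2" "finite X"
  shows "card (closed_adj_pairs E X X) = 2 * card (edges_between E X X) + card X"
proof -
  have no_loops: "{x} \<notin> E" for x
    using assms(1) by force
  let ?A = "{(x, y) \<in> X \<times> X. {x, y} \<in> E}"
  have "closed_adj_pairs E X X = ?A \<union> (\<lambda>x. (x, x)) ` X"
    by (auto simp: closed_adj_pairs_def)
  moreover have "?A \<inter> (\<lambda>x. (x, x)) ` X = {}"
    using no_loops by auto
  moreover have "finite ?A"
    using assms(2) by (auto intro: finite_subset)
  ultimately have "card (closed_adj_pairs E X X) = card ?A + card ((\<lambda>x. (x, x)) ` X)"
    using assms(2) by (simp add: card_Un_disjoint)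
  also have "card ((\<lambda>x. (x, x)) ` X) = card X"
    by (simp add: card_image inj_on_def)
  finally show ?thesis
    using card_adj_pairs_self[OF assms] by simp
qed

lemma simple_graph_edges_between_self:
  assumes "simple_graph V E"
  shows "edges_between E V V = E"
proof
  show "edges_between E V V \<subseteq> E"
    by (auto simp: edges_between_def)
  show "E \<subseteq> edges_between E V V"
  proof
    fix e
    assume "e \<in> E"
    with assms obtain x y where "e = {x, y}" "e \<subseteq> V"
      unfolding simple_graph_def by (metis card_2_iff)
    with \<open>e \<in> E\<close> show "e \<in> edges_between E V V"
      unfolding edges_between_def by blast
  qed
qed

lemma card_closed_adj_pairs_color_classes:
  assumes "finite V" "\<forall>v\<in>V. c v \<in> K" "finite K"
  shows "card (closed_adj_pairs E V V)
    = (\<Sum>i\<in>K. \<Sum>j\<in>K. card (closed_adj_pairs E (color_class V c i) (color_class V c j)))"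
proof -
  have "c ` V \<subseteq> K"
    using assms(2) by auto
  have by_color: "(\<Sum>v\<in>V. f v) = (\<Sum>i\<in>K. \<Sum>v\<in>color_class V c i. f v)" for f :: "'a \<Rightarrow> nat"
    by (simp add: color_class_def sum.group[OF assms(1,3) \<open>c ` V \<subseteq> K\<close>])
  have finite_class: "finite (color_class V c i)" for i
    using assms(1) by (simp add: color_class_def)
  show ?thesis
    unfolding card_closed_adj_pairs[OF assms(1) assms(1)] card_closed_adj_pairs[OF finite_class finite_class]
      by_color
    by (rule sum.cong[OF refl], rule sum.swap)
qed

lemma cnb_coloring_card_closed_adj_pairs_indep:
  assumes "cnb_coloring V E k c" "finite V" "X \<subseteq> V" "j \<in> {1..k}" "j' \<in> {1..k}"
  shows "card (closed_adj_pairs E X (color_class V c j)) = card (closed_adj_pairs E X (color_class V c j'))"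
proof -
  have "finite X" "finite (color_class V c i)" for i
    using assms(2,3) by (auto simp: color_class_def intro: finite_subset)
  have row: "(\<Sum>y\<in>color_class V c i. of_bool (x = y \<or> {x, y} \<in> E) :: nat)
      = card {u \<in> closed_nbhd V E x. c u = i}" if "x \<in> V" for x i
  proof -
    have "color_class V c i \<inter> {y. x = y \<or> {x, y} \<in> E} = {u \<in> closed_nbhd V E x. c u = i}"
      using that by (auto simp: color_class_def closed_nbhd_def insert_commute)
    then show ?thesis
      using \<open>finite (color_class V c i)\<close> by (simp del: of_bool_or_iff)
  qed
  have rows_equal: "(\<Sum>y\<in>color_class V c j. of_bool (x = y \<or> {x, y} \<in> E) :: nat)
      = (\<Sum>y\<in>color_class V c j'. of_bool (x = y \<or> {x, y} \<in> E))" if "x \<in> X" for x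
  proof -
    have "x \<in> V"
      using that assms(3) by blast
    then show ?thesis
      using assms(1,4,5) unfolding row[OF \<open>x \<in> V\<close>] cnb_coloring_def by blast
  qed
  show ?thesis
    unfolding card_closed_adj_pairs[OF \<open>finite X\<close> \<open>finite (color_class V c _)\<close>]
    using rows_equal by (rule sum.cong[OF refl])
qed

lemma cnb_coloring_card_closed_adj_pairs:
  assumes "simple_graph V E" "cnb_coloring V E k c" "i \<in> {1..k}" "j \<in> {1..k}"
  shows "k\<^sup>2 * card (closed_adj_pairs E (color_class V c i) (color_class V c j)) = 2 * card E + card V"
proof -
  let ?C = "\<lambda>i. color_class V c i"
  define p where "p = card (closed_adj_pairs E (?C 1) (?C 1))"
  have "finite V" "\<forall>e\<in>E. card e = 2"
    using assms(1) by (auto simp: simple_graph_def)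
  have "?C i \<subseteq> V" for i
    by (auto simp: color_class_def)
  note indep = cnb_coloring_card_closed_adj_pairs_indep[OF assms(2) \<open>finite V\<close> \<open>?C _ \<subseteq> V\<close>]
  have "1 \<in> {1..k}"
    using assms(3) by simp
  have all_equal: "card (closed_adj_pairs E (?C i) (?C j)) = p" if "i \<in> {1..k}" "j \<in> {1..k}" for i j
  proof -
    have "card (closed_adj_pairs E (?C i) (?C j)) = card (closed_adj_pairs E (?C i) (?C 1))"
      using indep that(2) \<open>1 \<in> {1..k}\<close> .
    also have "\<dots> = card (closed_adj_pairs E (?C 1) (?C i))"
      by (rule card_closed_adj_pairs_commute)
    also have "\<dots> = p"
      unfolding p_def using indep that(1) \<open>1 \<in> {1..k}\<close> .
    finally show ?thesis .
  qed
  have "2 * card E + card V = card (closed_adj_pairs E V V)"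
    using card_closed_adj_pairs_self[OF \<open>\<forall>e\<in>E. card e = 2\<close> \<open>finite V\<close>]
    by (simp add: simple_graph_edges_between_self[OF assms(1)])
  also have "\<dots> = (\<Sum>i\<in>{1..k}. \<Sum>j\<in>{1..k}. card (closed_adj_pairs E (?C i) (?C j)))"
    using card_closed_adj_pairs_color_classes[OF \<open>finite V\<close>] assms(2)
    by (simp add: cnb_coloring_def)
  also have "\<dots> = k\<^sup>2 * p"
    by (simp add: all_equal power2_eq_square)
  finally show ?thesis
    using all_equal[OF assms(3,4)] by simp
qed

theorem theorem2p8:
  fixes V :: "'a set" and E :: "'a set set" and k :: nat and c :: "'a \<Rightarrow> nat"
  assumes "k \<ge> 2"
    and "simple_graph V E"
    and "cnb_coloring V E k c"
  shows "(\<forall>i\<in>{1..k}. \<forall>j\<in>{1..k}. i \<noteq> j \<longrightarrow>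
            real (card (edges_between E (color_class V c i) (color_class V c j)))
              = (2 * real (card E) + real (card V)) / real k ^ 2)
       \<and> (\<forall>i\<in>{1..k}.
            real (card (edges_between E (color_class V c i) (color_class V c i)))
              = (2 * real (card E) + real (card V)) / (2 * real k ^ 2)
                - real (card (color_class V c i)) / 2)"
proof -
  have count: "real k ^ 2 * real (card (closed_adj_pairs E (color_class V c i) (color_class V c j)))
      = 2 * real (card E) + real (card V)" if "i \<in> {1..k}" "j \<in> {1..k}" for i j
    using arg_cong[OF cnb_coloring_card_closed_adj_pairs[OF assms(2,3) that], of real] by simp
  have "k > 0"
    using assms(1) by simp
  show ?thesis
  proof (intro conjI ballI impI)
    fix i j
    assume "i \<in> {1..k}" "j \<in> {1..k}" "i \<noteq> j"
    then have "color_class V c i \<inter> color_class V c j = {}"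
      by (auto simp: color_class_def)
    then show "real (card (edges_between E (color_class V c i) (color_class V c j)))
        = (2 * real (card E) + real (card V)) / real k ^ 2"
      using count[OF \<open>i \<in> _\<close> \<open>j \<in> _\<close>] \<open>k > 0\<close> by (simp add: card_edges_between_disjoint field_simps)
  next
    fix i
    assume "i \<in> {1..k}"
    have "\<forall>e\<in>E. card e = 2" "finite (color_class V c i)"
      using assms(2) by (auto simp: simple_graph_def color_class_def)
    then show "real (card (edges_between E (color_class V c i) (color_class V c i)))
        = (2 * real (card E) + real (card V)) / (2 * real k ^ 2) - real (card (color_class V c i)) / 2"
      using count[OF \<open>i \<in> _\<close> \<open>i \<in> _\<close>] \<open>k > 0\<close> by (simp add: card_closed_adj_pairs_self field_simps)
  qed
qed

end
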